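(* For a graph $G$, the following are equivalent: (1) $G$ is a disjoint union of copies of $K_2$; (2) $G$ does not contain a connected subgraph with three vertices; (3) $\mathcal{H}_G=[0,\infty)$; (4) $0\in\mathcal{H}_G$; (5) $\mathcal{H}_G\not\subseteq[1,\infty)$; (6) $CE_H(G)=0$.
   Context: All graphs are finite and simple. For a graph $G=(V,E)$ with $V=\{1,\dots,n\}$ and $I\subset\mathbb{R}$, $\mathcal{P}_G(I)$ is the set of real symmetric positive semidefinite $n\times n$ matrices with entries in $I$ such that $a_{ij}=0$ whenever $i\neq j$ and $(i,j)\notin E$; $\mathcal{P}_G:=\mathcal{P}_G(\mathbb{R})$. For $A$ with nonnegative entries, $A^{\circ\alpha}:=(a_{ij}^\alpha)$ with the convention $0^\alpha:=0$ for all $\alpha$. $\mathcal{H}_G:=\{\alpha\in\mathbb{R}: A^{\circ\alpha}\in\mathcal{P}_G\ \forall A\in\mathcal{P}_G([0,\infty))\}$ and $CE_H(G):=\min\{\alpha\in\mathbb{R}: A^{\circ\beta}\in\mathcal{P}_G \text{ for all } A\in\mathcal{P}_G([0,\infty))\text{ and all }\beta\ge\alpha\}$. *)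

theory Defs
  imports Complex_Main
begin

definition sgraph :: "nat \<Rightarrow> (nat \<Rightarrow> nat \<Rightarrow> bool) \<Rightarrow> bool" where
  "sgraph n E \<longleftrightarrow> (\<forall>i j. E i j \<longrightarrow> i \<in> {1..n} \<and> j \<in> {1..n} \<and> i \<noteq> j \<and> E j i)"

text \<open>Real n x n matrices are functions nat => nat => real, only entries indexed by {1..n} matter.
  Symmetric positive semidefinite:\<close>
definition psd :: "nat \<Rightarrow> (nat \<Rightarrow> nat \<Rightarrow> real) \<Rightarrow> bool" where
  "psd n A \<longleftrightarrow> (\<forall>i\<in>{1..n}. \<forall>j\<in>{1..n}. A i j = A j i) \<and>
     (\<forall>x :: nat \<Rightarrow> real. (\<Sum>i\<in>{1..n}. \<Sum>j\<in>{1..n}. x i * A i j * x j) \<ge> 0)"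

definition inPG :: "nat \<Rightarrow> (nat \<Rightarrow> nat \<Rightarrow> bool) \<Rightarrow> real set \<Rightarrow> (nat \<Rightarrow> nat \<Rightarrow> real) \<Rightarrow> bool" where
  "inPG n E I A \<longleftrightarrow> psd n A \<and>
     (\<forall>i\<in>{1..n}. \<forall>j\<in>{1..n}. A i j \<in> I \<and> (i \<noteq> j \<and> \<not> E i j \<longrightarrow> A i j = 0))"

definition hpow :: "real \<Rightarrow> (nat \<Rightarrow> nat \<Rightarrow> real) \<Rightarrow> (nat \<Rightarrow> nat \<Rightarrow> real)" where
  "hpow \<alpha> A = (\<lambda>i j. if A i j = 0 then 0 else A i j powr \<alpha>)"

definition HG :: "nat \<Rightarrow> (nat \<Rightarrow> nat \<Rightarrow> bool) \<Rightarrow> real set" where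
  "HG n E = {\<alpha>. \<forall>A. inPG n E {0..} A \<longrightarrow> inPG n E UNIV (hpow \<alpha> A)}"

definition CE_H :: "nat \<Rightarrow> (nat \<Rightarrow> nat \<Rightarrow> bool) \<Rightarrow> real" where
  "CE_H n E = (LEAST \<alpha>::real. \<forall>A. inPG n E {0..} A \<longrightarrow>
                 (\<forall>\<beta>\<ge>\<alpha>. inPG n E UNIV (hpow \<beta> A)))"

text \<open>(1): every connected component is a K2 (or an isolated vertex): each vertex has
  at most one neighbour.\<close>
definition union_of_K2 :: "nat \<Rightarrow> (nat \<Rightarrow> nat \<Rightarrow> bool) \<Rightarrow> bool" where
  "union_of_K2 n E \<longleftrightarrow> (\<forall>v\<in>{1..n}. card {u\<in>{1..n}. E v u} \<le> 1)"

text \<open>(2): G contains a connected subgraph on three vertices (equivalently, the induced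
  subgraph on some 3-element vertex set S is connected).\<close>
definition has_connected_sub3 :: "nat \<Rightarrow> (nat \<Rightarrow> nat \<Rightarrow> bool) \<Rightarrow> bool" where
  "has_connected_sub3 n E \<longleftrightarrow> (\<exists>S. S \<subseteq> {1..n} \<and> card S = 3 \<and>
     (\<forall>x\<in>S. \<forall>y\<in>S. (\<lambda>u v. u \<in> S \<and> v \<in> S \<and> E u v)\<^sup>*\<^sup>* x y))"

end

theory Submission
  imports Defs "HOL-Analysis.Analysis"
begin

text \<open>If every vertex has at most one neighbour, a matrix in \<open>P\<^sub>G([0,\<infinity>))\<close> is, up to
  relabelling, block diagonal with blocks of size at most two, and every power \<open>\<beta> \<ge> 0\<close> keeps
  such blocks positive semidefinite (the \<open>2 \<times> 2\<close> determinant condition is preserved); a negative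
  power fails already on \<open>[2 1; 1 2]\<close> placed on an edge. Otherwise \<open>G\<close> contains a path
  \<open>u - v - w\<close>, and a rank-two matrix supported on it shows that no power \<open>\<alpha> < 1\<close> is admissible.
  In that case \<open>CE\<^sub>H(G)\<close> is nevertheless a genuine minimum \<open>\<ge> 1\<close>: the admissible powers are
  closed (by continuity in the exponent) and contain \<open>[n - 2, \<infinity>)\<close> by the FitzGerald-Horn
  theorem, which is proved by induction on the size via a Schur complement, the Schur product
  theorem and the identity
  \<open>A\<^sup>\<alpha> - R\<^sup>\<alpha> = \<alpha> \<integral>\<^sub>0\<^sup>1 (A - R) \<circ> (t A + (1 - t) R)\<^sup>\<alpha>\<^sup>-\<^sup>1 dt\<close>.\<close>

section \<open>Positive semidefinite matrices\<close>

definition quad_form :: "nat set \<Rightarrow> (nat \<Rightarrow> nat \<Rightarrow> real) \<Rightarrow> (nat \<Rightarrow> real) \<Rightarrow> real" where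
  "quad_form I A x = (\<Sum>i\<in>I. \<Sum>j\<in>I. x i * A i j * x j)"

definition psd_on :: "nat set \<Rightarrow> (nat \<Rightarrow> nat \<Rightarrow> real) \<Rightarrow> bool" where
  "psd_on I A \<longleftrightarrow> (\<forall>i\<in>I. \<forall>j\<in>I. A i j = A j i) \<and> (\<forall>x. quad_form I A x \<ge> 0)"

lemma psd_eq_psd_on: "psd n A = psd_on {1..n} A"
  by (simp add: psd_def psd_on_def quad_form_def)

lemma quad_form_cong:
  "(\<And>i j. i \<in> I \<Longrightarrow> j \<in> I \<Longrightarrow> A i j = B i j) \<Longrightarrow> quad_form I A x = quad_form I B x"
  by (simp add: quad_form_def)

lemma psd_on_cong:
  "(\<And>i j. i \<in> I \<Longrightarrow> j \<in> I \<Longrightarrow> A i j = B i j) \<Longrightarrow> psd_on I A \<longleftrightarrow> psd_on I B"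
  unfolding psd_on_def using quad_form_cong[of I A B] by auto

lemma quad_form_add: "quad_form I (\<lambda>i j. A i j + B i j) x = quad_form I A x + quad_form I B x"
  unfolding quad_form_def by (simp add: sum.distrib algebra_simps)

lemma quad_form_scale: "quad_form I (\<lambda>i j. c * A i j) x = c * quad_form I A x"
  unfolding quad_form_def by (simp add: sum_distrib_left algebra_simps)

lemma quad_form_rank_one: "quad_form I (\<lambda>i j. u i * u j * c) x = c * (\<Sum>i\<in>I. x i * u i)\<^sup>2"
  unfolding quad_form_def by (simp add: power2_eq_square sum_product sum_distrib_left mult_ac)

lemma quad_form_restrict:
  assumes "finite I" "J \<subseteq> I"
  shows "quad_form I A (\<lambda>k. if k \<in> J then x k else 0) = quad_form J A x"
proof -
  have restrict: "(\<Sum>k\<in>I. if k \<in> J then g k else 0) = (\<Sum>k\<in>J. g k)" for g :: "nat \<Rightarrow> real"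
    using assms by (simp add: sum.inter_restrict[symmetric] Int_absorb1)
  have "quad_form I A (\<lambda>k. if k \<in> J then x k else 0)
      = (\<Sum>i\<in>I. if i \<in> J then (\<Sum>j\<in>I. if j \<in> J then x i * A i j * x j else 0) else 0)"
    unfolding quad_form_def by (auto intro!: sum.cong)
  then show ?thesis by (simp add: restrict quad_form_def)
qed

lemma quad_form_remove_zero_row:
  assumes "finite I" "m \<in> I" "\<And>i. i \<in> I \<Longrightarrow> A i m = 0" "\<And>i. i \<in> I \<Longrightarrow> A m i = 0"
  shows "quad_form I A x = quad_form (I - {m}) A x"
proof -
  have "quad_form I A x = (\<Sum>i\<in>I. \<Sum>j\<in>I - {m}. x i * A i j * x j)"
    unfolding quad_form_def
    by (rule sum.cong[OF refl], subst sum.remove[OF assms(1,2)], simp add: assms(3))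
  also have "\<dots> = quad_form (I - {m}) A x"
    unfolding quad_form_def by (subst sum.remove[OF assms(1,2)], simp add: assms(4))
  finally show ?thesis .
qed

lemma quad_form_two:
  assumes "finite I" "p \<in> I" "q \<in> I" "p \<noteq> q"
  shows "quad_form I A (\<lambda>k. if k = p then s else if k = q then t else 0)
     = s * s * A p p + s * t * A p q + t * s * A q p + t * t * A q q"
proof -
  have "quad_form I A (\<lambda>k. if k = p then s else if k = q then t else 0) =
        quad_form I A (\<lambda>k. if k \<in> {p,q} then (if k = p then s else t) else 0)"
    unfolding quad_form_def by (intro sum.cong) auto
  also have "\<dots> = quad_form {p,q} A (\<lambda>k. if k = p then s else t)"
    using quad_form_restrict[OF assms(1), of "{p,q}"] assms by simp
  also have "\<dots> = s * s * A p p + s * t * A p q + t * s * A q p + t * t * A q q"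
    using assms(4) by (simp add: quad_form_def)
  finally show ?thesis .
qed

lemma quad_form_shift_coord:
  assumes "finite I" "m \<in> I"
  shows "quad_form I A (\<lambda>k. x k + (if k = m then s else 0)) =
    quad_form I A x + s * (\<Sum>j\<in>I. A m j * x j) + s * (\<Sum>i\<in>I. x i * A i m) + s * s * A m m"
proof -
  define d where "d k = (if k = m then s else 0)" for k
  have expand: "(x i + d i) * A i j * (x j + d j)
      = x i * A i j * x j + d i * (A i j * x j) + (x i * A i j) * d j + d i * A i j * d j" for i j
    by (simp add: algebra_simps)
  have row: "(\<Sum>i\<in>I. d i * f i) = s * f m" for f :: "nat \<Rightarrow> real"
  proof -
    have "(\<Sum>i\<in>I. d i * f i) = (\<Sum>i\<in>I. if i = m then s * f i else 0)"
      by (intro sum.cong) (auto simp: d_def)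
    then show ?thesis using assms by (simp add: sum.delta)
  qed
  have col: "(\<Sum>j\<in>I. f j * d j) = s * f m" for f :: "nat \<Rightarrow> real"
    using row[of f] by (simp add: mult.commute)
  have "quad_form I A (\<lambda>k. x k + d k) = quad_form I A x
      + (\<Sum>i\<in>I. d i * (\<Sum>j\<in>I. A i j * x j)) + (\<Sum>i\<in>I. \<Sum>j\<in>I. (x i * A i j) * d j)
      + (\<Sum>i\<in>I. d i * (\<Sum>j\<in>I. A i j * d j))"
    unfolding quad_form_def expand by (simp add: sum.distrib sum_distrib_left mult.assoc)
  also have "\<dots> = quad_form I A x + s * (\<Sum>j\<in>I. A m j * x j) + s * (\<Sum>i\<in>I. x i * A i m)
      + s * s * A m m"
    by (simp add: row col sum_distrib_left[symmetric])
  finally show ?thesis by (simp add: d_def)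
qed

lemma psd_on_subset: "finite I \<Longrightarrow> J \<subseteq> I \<Longrightarrow> psd_on I A \<Longrightarrow> psd_on J A"
  unfolding psd_on_def using quad_form_restrict by (metis subsetD)

lemma psd_on_insert_zero_row:
  assumes "finite I" "m \<in> I" "\<And>i. i \<in> I \<Longrightarrow> A i m = 0" "\<And>i. i \<in> I \<Longrightarrow> A m i = 0"
    and "psd_on (I - {m}) A"
  shows "psd_on I A"
  unfolding psd_on_def
proof (intro conjI ballI allI)
  fix i j assume "i \<in> I" "j \<in> I"
  then show "A i j = A j i" using assms(3-5) unfolding psd_on_def by (cases "i = m \<or> j = m") auto
next
  fix x
  show "0 \<le> quad_form I A x"
    using assms(5) quad_form_remove_zero_row[OF assms(1,2), of A x] assms(3,4) unfolding psd_on_def by simp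
qed

lemma psd_on_add: "psd_on I A \<Longrightarrow> psd_on I B \<Longrightarrow> psd_on I (\<lambda>i j. A i j + B i j)"
  unfolding psd_on_def by (simp add: quad_form_add add_nonneg_nonneg)

lemma psd_on_scale: "0 \<le> c \<Longrightarrow> psd_on I A \<Longrightarrow> psd_on I (\<lambda>i j. c * A i j)"
  unfolding psd_on_def by (simp add: quad_form_scale)

lemma psd_on_mult_rank_one:
  assumes "psd_on I B" "0 \<le> c"
  shows "psd_on I (\<lambda>i j. B i j * (u i * u j * c))"
proof -
  have "quad_form I (\<lambda>i j. B i j * (u i * u j * c)) x = c * quad_form I B (\<lambda>i. x i * u i)" for x
    unfolding quad_form_def by (simp add: sum_distrib_left algebra_simps)
  then show ?thesis using assms unfolding psd_on_def by (simp add: mult.commute)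
qed

lemma psd_on_rank_one: "0 \<le> c \<Longrightarrow> psd_on I (\<lambda>i j. u i * u j * c)"
  unfolding psd_on_def by (simp add: quad_form_rank_one)

lemma psd_on_diag_nonneg:
  assumes "finite I" "psd_on I A" "p \<in> I"
  shows "0 \<le> A p p"
proof -
  have "0 \<le> quad_form I A (\<lambda>k. if k \<in> {p} then 1 else 0)"
    using assms(2) unfolding psd_on_def by blast
  also have "\<dots> = A p p"
    using quad_form_restrict[OF assms(1), of "{p}" A "\<lambda>_. 1"] assms(3) by (simp add: quad_form_def)
  finally show ?thesis .
qed

lemma psd_on_offdiag_sq_le:
  assumes "finite I" "psd_on I A" "p \<in> I" "q \<in> I" "p \<noteq> q"
  shows "(A p q)\<^sup>2 \<le> A p p * A q q"
proof -
  have sym: "A q p = A p q" using assms unfolding psd_on_def by auto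
  have Q: "0 \<le> s * s * A p p + 2 * s * A p q + A q q" for s
  proof -
    have "0 \<le> quad_form I A (\<lambda>k. if k = p then s else if k = q then 1 else 0)"
      using assms(2) unfolding psd_on_def by blast
    then show ?thesis using quad_form_two[OF assms(1,3,4,5)] sym by (simp add: algebra_simps)
  qed
  have pp: "0 \<le> A p p" using psd_on_diag_nonneg assms by blast
  show ?thesis
  proof (cases "A p p = 0")
    case True
    have "A p q = 0"
    proof (rule ccontr)
      assume ne: "A p q \<noteq> 0"
      from Q[of "- (A q q + 1) / (2 * A p q)"] show False using True ne by (simp add: field_simps)
    qed
    then show ?thesis using True by simp
  next
    case False
    then have pos: "0 < A p p" using pp by simp
    from Q[of "- A p q / A p p"] have "0 \<le> A q q - (A p q)\<^sup>2 / A p p"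
      using pos by (simp add: field_simps power2_eq_square)
    then show ?thesis using pos by (simp add: field_simps)
  qed
qed

lemma psd_on_zero_diag_row:
  assumes "finite I" "psd_on I A" "m \<in> I" "A m m = 0" "i \<in> I"
  shows "A i m = 0" "A m i = 0"
proof -
  show "A i m = 0"
  proof (cases "i = m")
    case False
    then show ?thesis using psd_on_offdiag_sq_le[OF assms(1,2,5,3)] assms(4) by simp
  qed (use assms in simp)
  then show "A m i = 0" using assms unfolding psd_on_def by auto
qed

lemma psd_on_schur_complement:
  assumes "finite I" "m \<in> I" "psd_on I A" "0 < A m m"
  shows "psd_on I (\<lambda>i j. A i j - A i m * A j m / A m m)"
  unfolding psd_on_def
proof (intro conjI ballI allI)
  have sym: "\<forall>i\<in>I. \<forall>j\<in>I. A i j = A j i" using assms(3) unfolding psd_on_def by auto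
  fix x
  define w where "w = (\<Sum>j\<in>I. A m j * x j)"
  have w': "(\<Sum>i\<in>I. x i * A i m) = w"
    unfolding w_def using sym assms(2) by (intro sum.cong) (auto simp: mult.commute)
  \<comment> \<open>Completing the square: shift the m-th coordinate by the minimiser \<open>-w / A m m\<close>.\<close>
  have "0 \<le> quad_form I A (\<lambda>k. x k + (if k = m then - w / A m m else 0))"
    using assms(3) unfolding psd_on_def by blast
  also have "\<dots> = quad_form I A x + (- w / A m m) * w + (- w / A m m) * w
      + (- w / A m m) * (- w / A m m) * A m m"
    by (simp add: quad_form_shift_coord[OF assms(1,2)] w' w_def)
  also have "\<dots> = quad_form I A x - w\<^sup>2 / A m m"
    using assms(4) by (simp add: field_simps power2_eq_square)
  also have "\<dots> = quad_form I (\<lambda>i j. A i j - A i m * A j m / A m m) x"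
    using quad_form_add[of I A "\<lambda>i j. A i m * A j m * (- 1 / A m m)" x]
      quad_form_rank_one[of I "\<lambda>i. A i m" "- 1 / A m m" x] w'
    by (simp add: field_simps)
  finally show "0 \<le> quad_form I (\<lambda>i j. A i j - A i m * A j m / A m m) x" .
next
  fix i j assume "i \<in> I" "j \<in> I"
  then show "A i j - A i m * A j m / A m m = A j i - A j m * A i m / A m m"
    using assms(3) unfolding psd_on_def by (simp add: mult.commute)
qed

theorem psd_on_schur_product:
  assumes "finite I" "psd_on I B" "psd_on I D"
  shows "psd_on I (\<lambda>i j. B i j * D i j)"
  using assms
proof (induction I arbitrary: D rule: finite_psubset_induct)
  case (psubset I)
  note fin = psubset.hyps(1)
  show ?case
  proof (cases "I = {}")
    case True then show ?thesis by (simp add: psd_on_def quad_form_def)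
  next
    case False
    then obtain m where m: "m \<in> I" by blast
    have IH: "psd_on I D' \<Longrightarrow> psd_on (I - {m}) (\<lambda>i j. B i j * D' i j)" for D'
      using psubset.IH[of "I - {m}" D'] psd_on_subset[OF fin, of "I - {m}"] psubset.prems(1) m
      by blast
    consider "D m m = 0" | "0 < D m m"
      using psd_on_diag_nonneg[OF fin psubset.prems(2) m] by linarith
    then show ?thesis
    proof cases
      case 1
      have "B i m * D i m = 0" "B m i * D m i = 0" if "i \<in> I" for i
        using psd_on_zero_diag_row[OF fin psubset.prems(2) m 1 that] by auto
      then show ?thesis
        using IH[OF psubset.prems(2)] by (rule psd_on_insert_zero_row[OF fin m])
    next
      case 2
      \<comment> \<open>Split \<open>D\<close> into its Schur complement at \<open>m\<close>, whose row \<open>m\<close> vanishes, and a rank-one part.\<close>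
      define D' where "D' i j = D i j - D i m * D j m / D m m" for i j
      have PD': "psd_on I D'"
        unfolding D'_def by (rule psd_on_schur_complement[OF fin m psubset.prems(2) 2])
      have "B i m * D' i m = 0" "B m i * D' m i = 0" if "i \<in> I" for i
        using 2 psubset.prems(2) m that unfolding psd_on_def by (auto simp: D'_def)
      then have "psd_on I (\<lambda>i j. B i j * D' i j)"
        using IH[OF PD'] by (rule psd_on_insert_zero_row[OF fin m])
      moreover have "psd_on I (\<lambda>i j. B i j * (D i m * D j m * (1 / D m m)))"
        using 2 by (intro psd_on_mult_rank_one psubset.prems) simp
      ultimately have "psd_on I (\<lambda>i j. B i j * D' i j + B i j * (D i m * D j m * (1 / D m m)))"
        by (rule psd_on_add)
      then show ?thesis by (simp add: D'_def algebra_simps)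
    qed
  qed
qed

section \<open>Matrices whose support is a matching\<close>

definition matching_support :: "nat set \<Rightarrow> (nat \<Rightarrow> nat \<Rightarrow> real) \<Rightarrow> bool" where
  "matching_support I A \<longleftrightarrow>
     (\<forall>i\<in>I. \<forall>j\<in>I. \<forall>k\<in>I. i \<noteq> j \<longrightarrow> i \<noteq> k \<longrightarrow> A i j \<noteq> 0 \<longrightarrow> A i k \<noteq> 0 \<longrightarrow> j = k)"

lemma matching_support_card_le_2:
  assumes "finite I" "card I \<le> 2"
  shows "matching_support I A"
  unfolding matching_support_def
proof (intro ballI impI; rule ccontr)
  fix i j k assume "i \<in> I" "j \<in> I" "k \<in> I" "i \<noteq> j" "i \<noteq> k" "j \<noteq> k"
  then have "3 = card {i, j, k}" by simp
  also have "\<dots> \<le> card I" using \<open>i \<in> I\<close> \<open>j \<in> I\<close> \<open>k \<in> I\<close> by (intro card_mono assms(1)) auto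
  finally show False using assms(2) by simp
qed

lemma matching_support_powr:
  assumes "matching_support I A"
  shows "matching_support I (\<lambda>i j. A i j powr \<beta>)"
  unfolding matching_support_def
proof (intro ballI impI)
  fix i j k assume ijk: "i \<in> I" "j \<in> I" "k \<in> I" "i \<noteq> j" "i \<noteq> k"
    and "A i j powr \<beta> \<noteq> 0" "A i k powr \<beta> \<noteq> 0"
  then have "A i j \<noteq> 0" "A i k \<noteq> 0" by auto
  then show "j = k" using assms ijk unfolding matching_support_def by blast
qed

lemma matching_support_card_neighbours:
  assumes "finite I" "matching_support I B" "i \<in> I"
  shows "card {j\<in>I. i \<noteq> j \<and> B i j \<noteq> 0} \<le> 1"
proof -
  have "a = b" if "a \<in> {j\<in>I. i \<noteq> j \<and> B i j \<noteq> 0}" "b \<in> {j\<in>I. i \<noteq> j \<and> B i j \<noteq> 0}" for a b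
    using that assms(2)[unfolded matching_support_def, rule_format, of i a b] assms(3) by auto
  then show ?thesis using card_le_Suc0_iff_eq[of "{j\<in>I. i \<noteq> j \<and> B i j \<noteq> 0}"] assms(1) by auto
qed

lemma sum_symmetric_swap:
  assumes "\<And>i j. i \<in> I \<Longrightarrow> j \<in> I \<Longrightarrow> N i j = N j i"
  shows "(\<Sum>i\<in>I. \<Sum>j\<in>I. if N i j then f j else 0) = (\<Sum>i\<in>I. \<Sum>j\<in>I. if N i j then f i else 0)"
proof -
  have "(\<Sum>i\<in>I. \<Sum>j\<in>I. if N i j then f j else 0) = (\<Sum>j\<in>I. \<Sum>i\<in>I. if N i j then f j else 0)"
    by (rule sum.swap)
  also have "\<dots> = (\<Sum>j\<in>I. \<Sum>i\<in>I. if N j i then f j else 0)"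
    using assms by (intro sum.cong refl) auto
  finally show ?thesis .
qed

lemma cross_term_lower_bound:
  fixes a b c u v :: real
  assumes "0 \<le> a" "0 \<le> c" "b\<^sup>2 \<le> a * c"
  shows "- (a * u\<^sup>2 + c * v\<^sup>2) / 2 \<le> u * b * v"
proof (cases "a = 0")
  case True
  then show ?thesis using assms by simp
next
  case False
  then have "0 < a" using assms by simp
  moreover have "0 \<le> a * (a * u\<^sup>2 + 2 * u * b * v + c * v\<^sup>2)"
  proof -
    have "a * (a * u\<^sup>2 + 2 * u * b * v + c * v\<^sup>2) = (a * u + b * v)\<^sup>2 + (a * c - b\<^sup>2) * v\<^sup>2"
      by (simp add: power2_eq_square algebra_simps)
    then show ?thesis using assms(3) by simp
  qed
  ultimately have "0 \<le> a * u\<^sup>2 + 2 * u * b * v + c * v\<^sup>2"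
    by (simp add: zero_le_mult_iff)
  then show ?thesis by simp
qed

lemma sum_neighbours_le:
  fixes c :: "nat \<Rightarrow> real"
  assumes "finite I" "\<And>i. i \<in> I \<Longrightarrow> 0 \<le> c i" "\<And>i. i \<in> I \<Longrightarrow> card {j\<in>I. N i j} \<le> 1"
  shows "(\<Sum>i\<in>I. \<Sum>j\<in>I. if N i j then c i else 0) \<le> (\<Sum>i\<in>I. c i)"
proof (rule sum_mono)
  fix i assume i: "i \<in> I"
  have "(\<Sum>j\<in>I. if N i j then c i else 0) = real (card {j\<in>I. N i j}) * c i"
    using assms(1) by (simp add: sum.inter_filter[symmetric])
  also have "\<dots> \<le> 1 * c i"
    using assms(2,3)[OF i] by (intro mult_right_mono) auto
  finally show "(\<Sum>j\<in>I. if N i j then c i else 0) \<le> c i" by simp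
qed

text \<open>Rather than permuting such a matrix into \<open>2 \<times> 2\<close> blocks, bound each off-diagonal term by
  AM-GM; since the support is a matching, each diagonal term is used at most once.\<close>
lemma psd_on_matching_support:
  assumes fin: "finite I"
    and sym: "\<forall>i\<in>I. \<forall>j\<in>I. B i j = B j i"
    and diag: "\<forall>i\<in>I. 0 \<le> B i i"
    and minor: "\<forall>i\<in>I. \<forall>j\<in>I. i \<noteq> j \<longrightarrow> (B i j)\<^sup>2 \<le> B i i * B j j"
    and match: "matching_support I B"
  shows "psd_on I B"
  unfolding psd_on_def
proof (intro conjI sym allI)
  fix x
  define c where "c i = B i i * (x i)\<^sup>2" for i
  define N where "N i j \<longleftrightarrow> i \<noteq> j \<and> B i j \<noteq> 0" for i j
  have c_nonneg: "0 \<le> c i" if "i \<in> I" for i using diag that by (simp add: c_def)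
  have deg: "card {j\<in>I. N i j} \<le> 1" if "i \<in> I" for i
    using matching_support_card_neighbours[OF fin match that] by (simp add: N_def)
  have entry: "(if i = j then c i else 0) - (if N i j then c i / 2 else 0) - (if N i j then c j / 2 else 0)
      \<le> x i * B i j * x j" if "i \<in> I" "j \<in> I" for i j
  proof (cases "N i j")
    case True
    have "- (B i i * (x i)\<^sup>2 + B j j * (x j)\<^sup>2) / 2 \<le> x i * B i j * x j"
      using True diag minor that by (intro cross_term_lower_bound) (auto simp: N_def)
    then show ?thesis using True by (simp add: N_def c_def field_simps)
  next
    case False
    then show ?thesis by (cases "i = j") (auto simp: N_def c_def power2_eq_square mult_ac)
  qed
  have swap: "(\<Sum>i\<in>I. \<Sum>j\<in>I. if N i j then c j / 2 else 0)
      = (\<Sum>i\<in>I. \<Sum>j\<in>I. if N i j then c i / 2 else 0)"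
    using sym by (intro sum_symmetric_swap) (auto simp: N_def)
  have "(\<Sum>i\<in>I. \<Sum>j\<in>I. if N i j then c i / 2 else 0) \<le> (\<Sum>i\<in>I. c i / 2)"
    using c_nonneg deg by (intro sum_neighbours_le fin) auto
  then have half: "(\<Sum>i\<in>I. \<Sum>j\<in>I. if N i j then c i / 2 else 0) \<le> (\<Sum>i\<in>I. c i) / 2"
    by (simp only: sum_divide_distrib)
  have diagonal: "(\<Sum>i\<in>I. \<Sum>j\<in>I. if i = j then c i else 0) = (\<Sum>i\<in>I. c i)"
    using fin by (intro sum.cong refl) (simp add: sum.delta)
  have "(\<Sum>i\<in>I. c i) - (\<Sum>i\<in>I. \<Sum>j\<in>I. if N i j then c i / 2 else 0)
      - (\<Sum>i\<in>I. \<Sum>j\<in>I. if N i j then c j / 2 else 0)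
      = (\<Sum>i\<in>I. \<Sum>j\<in>I. (if i = j then c i else 0) - (if N i j then c i / 2 else 0)
          - (if N i j then c j / 2 else 0))"
    by (simp only: sum_subtractf diagonal)
  also have "\<dots> \<le> quad_form I B x"
    unfolding quad_form_def by (intro sum_mono entry)
  finally show "0 \<le> quad_form I B x" using swap half by linarith
qed

lemma powr_sq_le_of_sq_le:
  fixes a b c \<beta> :: real
  assumes "0 \<le> a" "0 \<le> b" "0 \<le> c" "0 \<le> \<beta>" "b\<^sup>2 \<le> a * c"
  shows "(b powr \<beta>)\<^sup>2 \<le> a powr \<beta> * c powr \<beta>"
proof -
  have "(b\<^sup>2) powr \<beta> \<le> (a * c) powr \<beta>" using assms by (intro powr_mono2) auto
  then show ?thesis using assms by (simp add: power2_eq_square powr_mult)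
qed

lemma psd_on_powr_matching_support:
  assumes "finite I" "psd_on I A" "\<forall>i\<in>I. \<forall>j\<in>I. 0 \<le> A i j" "0 \<le> \<beta>" "matching_support I A"
  shows "psd_on I (\<lambda>i j. A i j powr \<beta>)"
proof (rule psd_on_matching_support[OF assms(1)])
  show "\<forall>i\<in>I. \<forall>j\<in>I. A i j powr \<beta> = A j i powr \<beta>" using assms(2) unfolding psd_on_def by simp
  show "\<forall>i\<in>I. 0 \<le> A i i powr \<beta>" by simp
  show "\<forall>i\<in>I. \<forall>j\<in>I. i \<noteq> j \<longrightarrow> (A i j powr \<beta>)\<^sup>2 \<le> A i i powr \<beta> * A j j powr \<beta>"
    using assms(3,4) psd_on_offdiag_sq_le[OF assms(1,2)] by (simp add: powr_sq_le_of_sq_le)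
  show "matching_support I (\<lambda>i j. A i j powr \<beta>)" using assms(5) by (rule matching_support_powr)
qed

section \<open>The FitzGerald-Horn theorem\<close>

lemma has_integral_powr_segment:
  fixes x y \<alpha> :: real
  assumes "0 \<le> x" "0 \<le> y" "1 \<le> \<alpha>"
  shows "((\<lambda>t. \<alpha> * (x - y) * (t * x + (1 - t) * y) powr (\<alpha> - 1)) has_integral (x powr \<alpha> - y powr \<alpha>)) {0..1}"
proof (cases "x = 0 \<and> y = 0")
  case True then show ?thesis by simp
next
  case False
  define f where "f t = (t * x + (1 - t) * y) powr \<alpha>" for t
  have "((\<lambda>t. \<alpha> * (t * x + (1 - t) * y) powr (\<alpha> - 1) * (x - y)) has_integral (f 1 - f 0)) {0..1}"
  proof (rule fundamental_theorem_of_calculus_interior)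
    show "continuous_on {0..1} f" unfolding f_def
      by (rule continuous_on_powr') (use assms in \<open>auto intro!: continuous_intros\<close>)
  next
    fix t :: real assume t: "t \<in> {0<..<1}"
    \<comment> \<open>The segment avoids \<open>0\<close> in its interior, where \<open>powr\<close> is differentiable.\<close>
    have "0 < t * x \<or> 0 < (1 - t) * y" "0 \<le> t * x" "0 \<le> (1 - t) * y"
      using t assms False by auto
    then have pos: "0 < t * x + (1 - t) * y" by linarith
    have "((\<lambda>t. t * x + (1 - t) * y) has_real_derivative (x - y)) (at t)"
      by (auto intro!: derivative_eq_intros)
    from DERIV_fun_powr[OF this pos, of \<alpha>]
    show "(f has_vector_derivative \<alpha> * (t * x + (1 - t) * y) powr (\<alpha> - 1) * (x - y)) (at t)"
      unfolding f_def by (simp add: has_real_derivative_iff_has_vector_derivative)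
  qed simp
  then show ?thesis by (simp add: f_def mult_ac)
qed

lemma quad_form_powr_le_of_segment:
  assumes fin: "finite I"
    and A: "\<forall>i\<in>I. \<forall>j\<in>I. 0 \<le> A i j" and R: "\<forall>i\<in>I. \<forall>j\<in>I. 0 \<le> R i j" and \<alpha>: "1 \<le> \<alpha>"
    and segment: "\<And>t. t \<in> {0..1} \<Longrightarrow>
      psd_on I (\<lambda>i j. (A i j - R i j) * (t * A i j + (1 - t) * R i j) powr (\<alpha> - 1))"
  shows "quad_form I (\<lambda>i j. R i j powr \<alpha>) x \<le> quad_form I (\<lambda>i j. A i j powr \<alpha>) x"
proof -
  \<comment> \<open>Integrate \<open>d/dt (t A + (1 - t) R)\<^sup>\<alpha> = \<alpha> (A - R) \<circ> (t A + (1 - t) R)\<^sup>\<alpha>\<^sup>-\<^sup>1\<close> entrywise.\<close>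
  have int: "((\<lambda>t. \<Sum>i\<in>I. \<Sum>j\<in>I. x i * x j * (\<alpha> * (A i j - R i j) * (t * A i j + (1 - t) * R i j) powr (\<alpha> - 1)))
       has_integral (\<Sum>i\<in>I. \<Sum>j\<in>I. x i * x j * (A i j powr \<alpha> - R i j powr \<alpha>))) {0..1}"
    using A R by (intro has_integral_sum fin has_integral_mult_right has_integral_powr_segment \<alpha>) auto
  have "0 \<le> (\<Sum>i\<in>I. \<Sum>j\<in>I. x i * x j * (A i j powr \<alpha> - R i j powr \<alpha>))"
  proof (rule has_integral_nonneg[OF int])
    fix t :: real assume t: "t \<in> {0..1}"
    have "(\<Sum>i\<in>I. \<Sum>j\<in>I. x i * x j * (\<alpha> * (A i j - R i j) * (t * A i j + (1 - t) * R i j) powr (\<alpha> - 1)))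
        = \<alpha> * quad_form I (\<lambda>i j. (A i j - R i j) * (t * A i j + (1 - t) * R i j) powr (\<alpha> - 1)) x"
      unfolding quad_form_def by (simp add: sum_distrib_left mult_ac)
    also have "0 \<le> \<dots>" using segment[OF t] \<alpha> unfolding psd_on_def by simp
    finally show "0 \<le> (\<Sum>i\<in>I. \<Sum>j\<in>I. x i * x j * (\<alpha> * (A i j - R i j) * (t * A i j + (1 - t) * R i j) powr (\<alpha> - 1)))" .
  qed
  also have "\<dots> = quad_form I (\<lambda>i j. A i j powr \<alpha>) x - quad_form I (\<lambda>i j. R i j powr \<alpha>) x"
    unfolding quad_form_def by (simp add: sum_subtractf algebra_simps)
  finally show ?thesis by simp
qed

lemma psd_on_powr_rank_one:
  assumes "\<forall>i\<in>I. 0 \<le> u i" "0 < c"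
  shows "psd_on I (\<lambda>i j. (u i * u j * c) powr \<alpha>)"
proof -
  have "psd_on I (\<lambda>i j. u i powr \<alpha> * u j powr \<alpha> * c powr \<alpha>)"
    by (rule psd_on_rank_one) simp
  then show ?thesis
    using assms by (subst psd_on_cong[where B = "\<lambda>i j. u i powr \<alpha> * u j powr \<alpha> * c powr \<alpha>"])
      (simp_all add: powr_mult)
qed

lemma psd_on_powr_step:
  assumes fin: "finite I" and m: "m \<in> I" and PA: "psd_on I A"
    and nonneg: "\<forall>i\<in>I. \<forall>j\<in>I. 0 \<le> A i j" and pivot: "0 < A m m" and \<alpha>: "1 \<le> \<alpha>"
    and IH: "\<And>C. psd_on (I - {m}) C \<Longrightarrow> \<forall>i\<in>I - {m}. \<forall>j\<in>I - {m}. 0 \<le> C i j \<Longrightarrow>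
      psd_on (I - {m}) (\<lambda>i j. C i j powr (\<alpha> - 1))"
  shows "psd_on I (\<lambda>i j. A i j powr \<alpha>)"
proof -
  define R where "R i j = A i m * A j m * (1 / A m m)" for i j
  define C where "C t i j = t * A i j + (1 - t) * R i j" for t i j
  have R_nonneg: "\<forall>i\<in>I. \<forall>j\<in>I. 0 \<le> R i j"
    using nonneg m pivot by (simp add: R_def)
  have PB: "psd_on I (\<lambda>i j. A i j - R i j)"
    using psd_on_schur_complement[OF fin m PA pivot] by (simp add: R_def)
  have B_row: "A i m - R i m = 0" "A m i - R m i = 0" if "i \<in> I" for i
    using pivot PA m that unfolding psd_on_def by (auto simp: R_def)
  have "psd_on I (\<lambda>i j. (A i j - R i j) * C t i j powr (\<alpha> - 1))" if t: "t \<in> {0..1}" for t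
  proof -
    have "psd_on I (\<lambda>i j. t * A i j + (1 - t) * R i j)"
      using t pivot unfolding R_def
      by (intro psd_on_add psd_on_scale psd_on_rank_one PA) auto
    then have "psd_on (I - {m}) (\<lambda>i j. C t i j powr (\<alpha> - 1))"
      using t nonneg R_nonneg psd_on_subset[OF fin, of "I - {m}"]
      by (intro IH) (auto simp: C_def)
    moreover have "psd_on (I - {m}) (\<lambda>i j. A i j - R i j)"
      using psd_on_subset[OF fin _ PB] by blast
    ultimately have "psd_on (I - {m}) (\<lambda>i j. (A i j - R i j) * C t i j powr (\<alpha> - 1))"
      using psd_on_schur_product[of "I - {m}"] fin by blast
    with B_row show ?thesis
      by (intro psd_on_insert_zero_row[OF fin m]) simp_all
  qed
  then have le: "quad_form I (\<lambda>i j. R i j powr \<alpha>) x \<le> quad_form I (\<lambda>i j. A i j powr \<alpha>) x" for x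
    by (intro quad_form_powr_le_of_segment fin nonneg R_nonneg \<alpha>) (simp add: C_def)
  have "psd_on I (\<lambda>i j. R i j powr \<alpha>)"
    unfolding R_def using nonneg m pivot by (intro psd_on_powr_rank_one) auto
  then have R_pos: "0 \<le> quad_form I (\<lambda>i j. R i j powr \<alpha>) x" for x
    unfolding psd_on_def by blast
  show ?thesis
    unfolding psd_on_def
  proof (intro conjI ballI allI)
    fix i j assume "i \<in> I" "j \<in> I"
    then show "A i j powr \<alpha> = A j i powr \<alpha>" using PA unfolding psd_on_def by simp
  next
    fix x show "0 \<le> quad_form I (\<lambda>i j. A i j powr \<alpha>) x" using R_pos[of x] le[of x] by linarith
  qed
qed

theorem psd_on_powr_fitzgerald_horn:
  assumes "finite I" "psd_on I A" "\<forall>i\<in>I. \<forall>j\<in>I. 0 \<le> A i j" "0 \<le> \<alpha>" "real (card I) \<le> \<alpha> + 2"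
  shows "psd_on I (\<lambda>i j. A i j powr \<alpha>)"
  using assms
proof (induction I arbitrary: A \<alpha> rule: finite_psubset_induct)
  case (psubset I)
  note fin = psubset.hyps(1) and PA = psubset.prems(1) and nonneg = psubset.prems(2)
  show ?case
  proof (cases "card I \<le> 2")
    case True
    then show ?thesis
      using psd_on_powr_matching_support[OF fin PA nonneg psubset.prems(3)]
        matching_support_card_le_2[OF fin] by blast
  next
    case False
    then have \<alpha>: "1 \<le> \<alpha>" using psubset.prems(4) by simp
    from False obtain m where m: "m \<in> I" by (metis card.empty ex_in_conv zero_le)
    have card_m: "real (card (I - {m})) = real (card I) - 1"
      using m fin False by (simp add: of_nat_diff)
    have IH: "psd_on (I - {m}) (\<lambda>i j. C i j powr \<beta>)"
      if "psd_on (I - {m}) C" "\<forall>i\<in>I - {m}. \<forall>j\<in>I - {m}. 0 \<le> C i j" "0 \<le> \<beta>"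
        "real (card I) \<le> \<beta> + 3" for C \<beta>
      using psubset.IH[of "I - {m}" C \<beta>] that m card_m by auto
    consider "A m m = 0" | "0 < A m m"
      using psd_on_diag_nonneg[OF fin PA m] by linarith
    then show ?thesis
    proof cases
      case 1
      have "psd_on (I - {m}) (\<lambda>i j. A i j powr \<alpha>)"
        using psd_on_subset[OF fin _ PA] nonneg psubset.prems(3,4) by (intro IH) auto
      then show ?thesis
        using psd_on_zero_diag_row[OF fin PA m 1] by (intro psd_on_insert_zero_row[OF fin m]) auto
    next
      case 2
      show ?thesis
        using psubset.prems(4) \<alpha>
        by (intro psd_on_powr_step[OF fin m PA nonneg 2 \<alpha>] IH) auto
    qed
  qed
qed

section \<open>Admissible entrywise powers on a graph\<close>

definition hpow_preserves :: "nat \<Rightarrow> (nat \<Rightarrow> nat \<Rightarrow> bool) \<Rightarrow> real \<Rightarrow> bool" where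
  "hpow_preserves n E \<beta> \<longleftrightarrow> (\<forall>A. inPG n E {0..} A \<longrightarrow> inPG n E UNIV (hpow \<beta> A))"

lemma HG_eq: "HG n E = {\<beta>. hpow_preserves n E \<beta>}"
  by (simp add: HG_def hpow_preserves_def)

lemma CE_H_eq: "CE_H n E = (LEAST \<alpha>. \<forall>\<beta>\<ge>\<alpha>. hpow_preserves n E \<beta>)"
  unfolding CE_H_def hpow_preserves_def by metis

text \<open>The convention \<open>0\<^sup>\<alpha> = 0\<close> is built into \<open>powr\<close>.\<close>
lemma hpow_eq_powr: "hpow \<beta> A = (\<lambda>i j. A i j powr \<beta>)"
  by (simp add: hpow_def fun_eq_iff)

lemma inPG_nonnegI:
  assumes "psd_on {1..n} A" "\<And>i j. 0 \<le> A i j" "\<And>i j. i \<noteq> j \<Longrightarrow> \<not> E i j \<Longrightarrow> A i j = 0"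
  shows "inPG n E {0..} A"
  using assms unfolding inPG_def psd_eq_psd_on by auto

lemma hpow_preserves_iff:
  "hpow_preserves n E \<beta> \<longleftrightarrow> (\<forall>A. inPG n E {0..} A \<longrightarrow> psd_on {1..n} (\<lambda>i j. A i j powr \<beta>))"
  unfolding hpow_preserves_def inPG_def hpow_eq_powr psd_eq_psd_on by auto

lemma hpow_preserves_fitzgerald_horn:
  assumes "0 \<le> \<beta>" "real n \<le> \<beta> + 2"
  shows "hpow_preserves n E \<beta>"
  unfolding hpow_preserves_iff inPG_def psd_eq_psd_on
  using assms by (auto intro: psd_on_powr_fitzgerald_horn)

lemma tendsto_powr_exponent: "((\<lambda>b. (a::real) powr b) \<longlongrightarrow> a powr c) (at c within S)"
proof (cases "a = 0")
  case False
  then show ?thesis by (intro tendsto_powr tendsto_const tendsto_ident_at) auto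
qed simp

lemma hpow_preserves_closed:
  assumes "\<forall>\<beta>>c. hpow_preserves n E \<beta>"
  shows "hpow_preserves n E c"
  unfolding hpow_preserves_iff psd_on_def
proof (intro allI impI conjI)
  fix A assume A: "inPG n E {0..} A"
  show "\<forall>i\<in>{1..n}. \<forall>j\<in>{1..n}. A i j powr c = A j i powr c"
    using A unfolding inPG_def psd_def by simp
  fix x
  define g where "g b = quad_form {1..n} (\<lambda>i j. A i j powr b) x" for b
  have "(g \<longlongrightarrow> g c) (at_right c)"
    unfolding g_def quad_form_def by (intro tendsto_intros tendsto_powr_exponent)
  moreover have "\<forall>\<^sub>F b in at_right c. 0 \<le> g b"
    using eventually_at_right_less[of c] A assms
    unfolding hpow_preserves_iff psd_on_def g_def by (auto elim!: eventually_mono)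
  ultimately show "0 \<le> quad_form {1..n} (\<lambda>i j. A i j powr c) x"
    unfolding g_def[symmetric] by (rule tendsto_lowerbound) simp
qed

lemma matching_support_if_union_of_K2:
  assumes "union_of_K2 n E" "inPG n E I A"
  shows "matching_support {1..n} A"
  unfolding matching_support_def
proof (intro ballI impI)
  fix i j k assume ijk: "i \<in> {1..n}" "j \<in> {1..n}" "k \<in> {1..n}" "i \<noteq> j" "i \<noteq> k"
    and nonzero: "A i j \<noteq> 0" "A i k \<noteq> 0"
  have pattern: "A p q = 0" if "p \<in> {1..n}" "q \<in> {1..n}" "p \<noteq> q" "\<not> E p q" for p q
    using assms(2) that unfolding inPG_def by blast
  have "j \<in> {u\<in>{1..n}. E i u}" "k \<in> {u\<in>{1..n}. E i u}"
    using pattern[of i j] pattern[of i k] ijk nonzero by auto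
  moreover have "card {u\<in>{1..n}. E i u} \<le> Suc 0"
    using assms(1) ijk(1) unfolding union_of_K2_def by simp
  ultimately show "j = k" using card_le_Suc0_iff_eq[of "{u\<in>{1..n}. E i u}"] by auto
qed

lemma hpow_preserves_union_of_K2:
  assumes "union_of_K2 n E" "0 \<le> \<beta>"
  shows "hpow_preserves n E \<beta>"
  unfolding hpow_preserves_iff
proof (intro allI impI)
  fix A assume A: "inPG n E {0..} A"
  then show "psd_on {1..n} (\<lambda>i j. A i j powr \<beta>)"
    using matching_support_if_union_of_K2[OF assms(1) A] assms(2)
    unfolding inPG_def psd_eq_psd_on by (intro psd_on_powr_matching_support) auto
qed

definition indicator_vec :: "nat set \<Rightarrow> nat \<Rightarrow> real" where
  "indicator_vec S k = (if k \<in> S then 1 else 0)"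

lemma psd_on_indicator_outer: "psd_on I (\<lambda>i j. indicator_vec S i * indicator_vec S j)"
  using psd_on_rank_one[of 1 I "indicator_vec S"] by simp

text \<open>The matrix \<open>[2 1; 1 2]\<close> on an edge: its entrywise \<open>\<alpha>\<close>-th power has determinant
  \<open>4\<^sup>\<alpha> - 1\<close>.\<close>
lemma hpow_preserves_edge_nonneg:
  assumes g: "sgraph n E" and e: "E i j" and P: "hpow_preserves n E \<alpha>"
  shows "0 \<le> \<alpha>"
proof -
  have ij: "i \<in> {1..n}" "j \<in> {1..n}" "i \<noteq> j" "E j i" using g e unfolding sgraph_def by blast+
  define A where "A p q = indicator_vec {i} p * indicator_vec {i} q
    + indicator_vec {j} p * indicator_vec {j} q + indicator_vec {i, j} p * indicator_vec {i, j} q" for p q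
  have "inPG n E {0..} A"
  proof (rule inPG_nonnegI)
    show "psd_on {1..n} A" unfolding A_def by (intro psd_on_add psd_on_indicator_outer)
  qed (use e ij in \<open>auto simp: A_def indicator_vec_def\<close>)
  then have "psd_on {1..n} (\<lambda>p q. A p q powr \<alpha>)" using P unfolding hpow_preserves_iff by blast
  then have "0 \<le> quad_form {1..n} (\<lambda>p q. A p q powr \<alpha>) (\<lambda>k. if k = i then 1 else if k = j then -1 else 0)"
    unfolding psd_on_def by blast
  also have "\<dots> = 2 * 2 powr \<alpha> - 2"
    using ij by (simp add: quad_form_two A_def indicator_vec_def)
  finally have "1 \<le> 2 powr \<alpha>" by simp
  then show ?thesis using powr_le_cancel_iff[of "2::real" 0 \<alpha>] by simp
qed

text \<open>On a path \<open>u - v - w\<close> take \<open>A = \<one>\<^sub>u\<^sub>v \<one>\<^sub>u\<^sub>v\<^sup>T + \<one>\<^sub>v\<^sub>w \<one>\<^sub>v\<^sub>w\<^sup>T\<close>; the test vector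
  \<open>(1, -1, 1)\<close> gives the value \<open>2\<^sup>\<alpha> - 2\<close> for its entrywise \<open>\<alpha>\<close>-th power.\<close>
lemma hpow_preserves_path_ge_one:
  assumes uvw: "u \<in> {1..n}" "v \<in> {1..n}" "w \<in> {1..n}" "u \<noteq> v" "v \<noteq> w" "u \<noteq> w"
    and e: "E u v" "E v u" "E v w" "E w v" and P: "hpow_preserves n E \<alpha>"
  shows "1 \<le> \<alpha>"
proof -
  define A where "A p q = indicator_vec {u, v} p * indicator_vec {u, v} q
    + indicator_vec {v, w} p * indicator_vec {v, w} q" for p q
  have "inPG n E {0..} A"
  proof (rule inPG_nonnegI)
    show "psd_on {1..n} A" unfolding A_def by (intro psd_on_add psd_on_indicator_outer)
  qed (use e in \<open>auto simp: A_def indicator_vec_def\<close>)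
  then have "psd_on {1..n} (\<lambda>p q. A p q powr \<alpha>)" using P unfolding hpow_preserves_iff by blast
  then have "0 \<le> quad_form {1..n} (\<lambda>p q. A p q powr \<alpha>)
      (\<lambda>k. if k \<in> {u, v, w} then (if k = v then -1 else 1) else 0)"
    unfolding psd_on_def by blast
  also have "\<dots> = quad_form {u, v, w} (\<lambda>p q. A p q powr \<alpha>) (\<lambda>k. if k = v then -1 else 1)"
    using uvw by (intro quad_form_restrict) auto
  also have "\<dots> = 2 powr \<alpha> - 2"
    using uvw by (simp add: quad_form_def A_def indicator_vec_def)
  finally have "2 \<le> 2 powr \<alpha>" by simp
  then show ?thesis using powr_le_cancel_iff[of "2::real" 1 \<alpha>] by simp
qed

section \<open>Graphs without a path on three vertices\<close>

lemma not_union_of_K2_obtains_path: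
  assumes "sgraph n E" "\<not> union_of_K2 n E"
  obtains u v w where "u \<in> {1..n}" "v \<in> {1..n}" "w \<in> {1..n}" "u \<noteq> v" "v \<noteq> w" "u \<noteq> w"
    "E u v" "E v u" "E v w" "E w v"
proof -
  obtain v where "v \<in> {1..n}" "\<not> card {u\<in>{1..n}. E v u} \<le> Suc 0"
    using assms(2) unfolding union_of_K2_def by auto
  then obtain u w where "u \<in> {x\<in>{1..n}. E v x}" "w \<in> {x\<in>{1..n}. E v x}" "u \<noteq> w"
    using card_le_Suc0_iff_eq[of "{u\<in>{1..n}. E v u}"] by auto
  then show ?thesis using that assms(1) unfolding sgraph_def by blast
qed

lemma union_of_K2_reachable:
  assumes "sgraph n E" "union_of_K2 n E" "E\<^sup>*\<^sup>* a y"
  shows "y = a \<or> E a y"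
  using assms(3)
proof (induction rule: rtranclp_induct)
  case (step y z)
  from step.IH show ?case
  proof
    assume "E a y"
    then have "E y a" "y \<in> {1..n}" "a \<in> {1..n}" "z \<in> {1..n}"
      using assms(1) \<open>E y z\<close> unfolding sgraph_def by blast+
    then have "a \<in> {u\<in>{1..n}. E y u}" "z \<in> {u\<in>{1..n}. E y u}" "card {u\<in>{1..n}. E y u} \<le> Suc 0"
      using assms(2) \<open>E y z\<close> unfolding union_of_K2_def by auto
    then show ?case using card_le_Suc0_iff_eq[of "{u\<in>{1..n}. E y u}"] by auto
  qed (use \<open>E y z\<close> in simp)
qed simp

lemma union_of_K2_no_connected_sub3:
  assumes "sgraph n E" "union_of_K2 n E"
  shows "\<not> has_connected_sub3 n E"
proof
  assume "has_connected_sub3 n E"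
  then obtain S where S: "S \<subseteq> {1..n}" "card S = 3"
    and conn: "\<forall>x\<in>S. \<forall>y\<in>S. (\<lambda>u v. u \<in> S \<and> v \<in> S \<and> E u v)\<^sup>*\<^sup>* x y"
    unfolding has_connected_sub3_def by blast
  obtain a where a: "a \<in> S" using S(2) by fastforce
  have "(\<lambda>u v. u \<in> S \<and> v \<in> S \<and> E u v)\<^sup>*\<^sup>* \<le> E\<^sup>*\<^sup>*" by (rule rtranclp_mono) auto
  then have "S \<subseteq> insert a {y\<in>{1..n}. E a y}"
    using union_of_K2_reachable[OF assms] conn a S(1) by blast
  then have "card S \<le> card (insert a {y\<in>{1..n}. E a y})" by (intro card_mono) auto
  also have "\<dots> \<le> Suc (card {y\<in>{1..n}. E a y})" by (simp add: card_insert_if)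
  also have "\<dots> \<le> 2" using assms(2) a S(1) unfolding union_of_K2_def by auto
  finally show False using S(2) by simp
qed

lemma path_connected_sub3:
  assumes "u \<in> {1..n}" "v \<in> {1..n}" "w \<in> {1..n}" "u \<noteq> v" "v \<noteq> w" "u \<noteq> w"
    and "E u v" "E v u" "E v w" "E w v"
  shows "has_connected_sub3 n E"
  unfolding has_connected_sub3_def
proof (intro exI conjI ballI)
  let ?R = "\<lambda>x y. x \<in> {u, v, w} \<and> y \<in> {u, v, w} \<and> E x y"
  show "{u, v, w} \<subseteq> {1..n}" "card {u, v, w} = 3" using assms by auto
  have to_v: "?R\<^sup>*\<^sup>* x v" and from_v: "?R\<^sup>*\<^sup>* v x" if "x \<in> {u, v, w}" for x
    using that assms by (auto intro: r_into_rtranclp)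
  fix x y assume "x \<in> {u, v, w}" "y \<in> {u, v, w}"
  then show "?R\<^sup>*\<^sup>* x y" using to_v from_v by (meson rtranclp_trans)
qed

lemma union_of_K2_iff_no_connected_sub3:
  assumes "sgraph n E"
  shows "union_of_K2 n E \<longleftrightarrow> \<not> has_connected_sub3 n E"
proof
  assume "\<not> has_connected_sub3 n E"
  show "union_of_K2 n E"
  proof (rule ccontr)
    assume "\<not> union_of_K2 n E"
    then obtain u v w where "u \<in> {1..n}" "v \<in> {1..n}" "w \<in> {1..n}" "u \<noteq> v" "v \<noteq> w" "u \<noteq> w"
      "E u v" "E v u" "E v w" "E w v"
      by (rule not_union_of_K2_obtains_path[OF assms])
    then have "has_connected_sub3 n E" by (rule path_connected_sub3)
    with \<open>\<not> has_connected_sub3 n E\<close> show False by contradiction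
  qed
qed (rule union_of_K2_no_connected_sub3[OF assms])

lemma Least_tail_attained:
  fixes P :: "real \<Rightarrow> bool"
  assumes tail: "\<forall>b\<ge>a. P b" and lower: "\<And>b. P b \<Longrightarrow> l \<le> b"
    and closed: "\<And>c. \<forall>b>c. P b \<Longrightarrow> P c"
  shows "\<forall>b\<ge>(LEAST a. \<forall>b\<ge>a. P b). P b"
proof -
  define S where "S = {a. \<forall>b\<ge>a. P b}"
  have "a \<in> S" using tail by (simp add: S_def)
  have "l \<le> s" if "s \<in> S" for s using lower that by (simp add: S_def)
  then have bdd: "bdd_below S" by (rule bdd_belowI)
  have above: "\<forall>b>Inf S. P b"
  proof (intro allI impI)
    fix b assume "Inf S < b"
    then obtain s where "s \<in> S" "s < b" using cInf_lessD[OF _ \<open>Inf S < b\<close>] \<open>a \<in> S\<close> by blast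
    then show "P b" by (simp add: S_def)
  qed
  have attained: "\<forall>b\<ge>Inf S. P b"
  proof (intro allI impI)
    fix b assume "Inf S \<le> b"
    then consider "b = Inf S" | "Inf S < b" by linarith
    then show "P b" using above closed[OF above] by cases simp_all
  qed
  have "(LEAST a. \<forall>b\<ge>a. P b) = Inf S"
  proof (rule Least_equality)
    fix y assume "\<forall>b\<ge>y. P b"
    then show "Inf S \<le> y" using cInf_lower[OF _ bdd] by (simp add: S_def)
  qed (rule attained)
  then show ?thesis using attained by simp
qed

lemma HG_union_of_K2:
  assumes "sgraph n E" "union_of_K2 n E" "E i j"
  shows "HG n E = {0..}"
  using hpow_preserves_union_of_K2[OF assms(2)] hpow_preserves_edge_nonneg[OF assms(1,3)]
  unfolding HG_eq by auto

lemma CE_H_union_of_K2: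
  assumes "sgraph n E" "union_of_K2 n E" "E i j"
  shows "CE_H n E = 0"
  unfolding CE_H_eq
proof (rule Least_equality)
  show "\<forall>\<beta>\<ge>0. hpow_preserves n E \<beta>" using hpow_preserves_union_of_K2[OF assms(2)] by blast
  fix \<alpha> :: real assume "\<forall>\<beta>\<ge>\<alpha>. hpow_preserves n E \<beta>"
  then show "0 \<le> \<alpha>" using hpow_preserves_edge_nonneg[OF assms(1,3)] by blast
qed

lemma hpow_preserves_not_union_of_K2:
  assumes "sgraph n E" "\<not> union_of_K2 n E" "hpow_preserves n E \<beta>"
  shows "1 \<le> \<beta>"
proof -
  obtain u v w where "u \<in> {1..n}" "v \<in> {1..n}" "w \<in> {1..n}" "u \<noteq> v" "v \<noteq> w" "u \<noteq> w"
    "E u v" "E v u" "E v w" "E w v"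
    using assms(1,2) by (rule not_union_of_K2_obtains_path)
  then show ?thesis using assms(3) by (rule hpow_preserves_path_ge_one)
qed

text \<open>Without the FitzGerald-Horn bound the minimum defining \<open>CE_H\<close> need not exist, and then
  \<open>LEAST\<close> has an unspecified value.\<close>
lemma CE_H_not_union_of_K2:
  assumes "sgraph n E" "\<not> union_of_K2 n E"
  shows "1 \<le> CE_H n E"
proof -
  have "\<forall>\<beta>\<ge>CE_H n E. hpow_preserves n E \<beta>"
    unfolding CE_H_eq
  proof (rule Least_tail_attained)
    show "\<forall>\<beta>\<ge>max 0 (real n). hpow_preserves n E \<beta>"
      by (auto intro: hpow_preserves_fitzgerald_horn)
  qed (use hpow_preserves_not_union_of_K2[OF assms] hpow_preserves_closed in auto)
  then show ?thesis using hpow_preserves_not_union_of_K2[OF assms] by blast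
qed

theorem corollary2p4:
  fixes n :: nat and E :: "nat \<Rightarrow> nat \<Rightarrow> bool"
  assumes "sgraph n E"
    and "\<exists>i j. E i j"
  shows "(union_of_K2 n E \<longleftrightarrow> \<not> has_connected_sub3 n E)
       \<and> (union_of_K2 n E \<longleftrightarrow> HG n E = {0..})
       \<and> (union_of_K2 n E \<longleftrightarrow> (0::real) \<in> HG n E)
       \<and> (union_of_K2 n E \<longleftrightarrow> \<not> HG n E \<subseteq> {1..})
       \<and> (union_of_K2 n E \<longleftrightarrow> CE_H n E = 0)"
proof -
  obtain i j where edge: "E i j" using assms(2) by blast
  show ?thesis
  proof (cases "union_of_K2 n E")
    case True
    then show ?thesis
      using union_of_K2_iff_no_connected_sub3[OF assms(1)]
        HG_union_of_K2[OF assms(1) True edge] CE_H_union_of_K2[OF assms(1) True edge] by auto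
  next
    case False
    have "HG n E \<subseteq> {1..}"
      using hpow_preserves_not_union_of_K2[OF assms(1) False] unfolding HG_eq by auto
    then show ?thesis
      using False union_of_K2_iff_no_connected_sub3[OF assms(1)]
        CE_H_not_union_of_K2[OF assms(1) False] by force
  qed
qed

end
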